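(* Let $\mathcal{D}=\{1,\ldots,d^{\max}\}$, $m_d>0$ with $\sum_d m_d=1$, $d^{\mathtt{avg}}=\sum_d d\,m_d$, $\alpha,\gamma\in(0,1)$, $\beta_\mathtt{P}^d\in(0,1)$, and $c_\mathtt{P},L>0$. For $\mathbf{y}=(y^d)_{d\in\mathcal{D}}\in[0,1]^{d^{\max}}$ let $\Theta(\mathbf{y}):=\sum_{d\in\mathcal{D}}\frac{d m_d}{d^{\mathtt{avg}}}\beta_\mathtt{P}^d y^d$, and define thresholds $\Theta^d_{th}:=\frac{c_\mathtt{P}}{L(1-\alpha)d}$ for $d\in\mathcal{D}$, with $\Theta^{d^{\max}+1}_{th}:=0$. Assume there is a degree $d$ with $\Theta^d_{th}<1$ and let $d_{\min}$ be the smallest such degree. Define the intervals $\mathcal{I}_{d^{\max}+1}:=[0,\Theta^{d^{\max}}_{th})$, $\mathcal{I}_{d_{\min}}:=(\Theta^{d_{\min}}_{th},1]$, and $\mathcal{I}_d:=(\Theta^d_{th},\Theta^{d-1}_{th})$ for $d\in\{d_{\min}+1,\ldots,d^{\max}\}$. Call $\mathbf{y}\in[0,1]^{d^{\max}}$ an equilibrium of the switched dynamics if for every $d\in\mathcal{D}$ there exists $z^d_{\mathtt{S}}\in[0,1]$ with $z^d_{\mathtt{S}}=1$ if $\Theta(\mathbf{y})<\Theta^d_{th}$, $z^d_{\mathtt{S}}=0$ if $\Theta(\mathbf{y})>\Theta^d_{th}$ (and $z^d_{\mathtt{S}}$ arbitrary in $[0,1]$ if $\Theta(\mathbf{y})=\Theta^d_{th}$),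 such that $$0=-\gamma y^d+(1-y^d)\big(z^d_{\mathtt{S}}+\alpha(1-z^d_{\mathtt{S}})\big)\,d\,\Theta(\mathbf{y}).$$ An endemic equilibrium is a nonzero equilibrium; $\mathbf{y}=0$ is the disease-free equilibrium. Let $\mathcal{R}(d^\star)$ and $\Theta_{\mathtt{EE}}(d^\star)$ (for $d^\star\in\{1,\ldots,d^{\max}+1\}$) be as defined in the context, and let $\mathbf{y}_{\mathtt{EE}}(d^\star)$ denote the corresponding endemic equilibrium of the fixed-$d^\star$ dynamics when $\mathcal{R}(d^\star)>1$. Then: (1) If $\mathcal{R}(d^{\max}+1)\le 1$, the disease-free equilibrium is the only equilibrium of the switched dynamics. (2) Suppose $\mathcal{R}(d^{\max}+1)>1$, and let $d^{\mathtt{eq}}$ be the smallest element of $\{d_{\min},\ldots,d^{\max}+1\}$ with $\Theta_{\mathtt{EE}}(d^{\mathtt{eq}})>\Theta^{d^{\mathtt{eq}}}_{th}$. (a) If $\Theta_{\mathtt{EE}}(d^{\mathtt{eq}})\in\mathcal{I}_{d^{\mathtt{eq}}}$, then $\mathbf{y}_{\mathtt{EE}}(d^{\mathtt{eq}})$ is the unique endemic equilibrium of the switched dynamics. (b) If $\Theta_{\mathtt{EE}}(d^{\mathtt{eq}})\ge\Theta^{d^{\mathtt{eq}}-1}_{th}$, then the switched dynamics has a unique endemic equilibrium; it satisfies $\Theta(\mathbf{y})=\Theta^{d^{\mathtt{eq}}-1}_{th}$ and $y^d=\frac{s_d\,d\,\Theta^{d^{\mathtt{eq}}-1}_{th}}{\gamma+s_d\,d\,\Theta^{d^{\mathtt{eq}}-1}_{th}}$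 for all $d$, where $s_d=1$ for $d<d^{\mathtt{eq}}-1$, $s_d=\alpha$ for $d>d^{\mathtt{eq}}-1$, and $s_{d^{\mathtt{eq}}-1}=\bar z+\alpha(1-\bar z)$ for some $\bar z\in[0,1]$.
   Context: For $d^\star\in\{1,\ldots,d^{\max}+1\}$: $$\mathcal{R}(d^\star):=\sum_{d=1}^{d^\star-1}\frac{d^2 m_d\beta_\mathtt{P}^d}{d^{\mathtt{avg}}\gamma}+\sum_{d=d^\star}^{d^{\max}}\frac{\alpha\, d^2 m_d\beta_\mathtt{P}^d}{d^{\mathtt{avg}}\gamma}.$$ The fixed-$d^\star$ dynamics is $\dot y^d=-\gamma y^d+(1-y^d)\kappa_d\,d\,\Theta(\mathbf{y})$ with $\kappa_d=1$ for $d<d^\star$ and $\kappa_d=\alpha$ for $d\ge d^\star$; when $\mathcal{R}(d^\star)>1$ it has a unique nonzero equilibrium $\mathbf{y}_{\mathtt{EE}}(d^\star)\in[0,1]^{d^{\max}}$. $\Theta_{\mathtt{EE}}(d^\star):=\Theta(\mathbf{y}_{\mathtt{EE}}(d^\star))$ if $\mathcal{R}(d^\star)>1$, which is the unique $\Theta>0$ with $1=\sum_{d<d^\star}\frac{d m_d}{d^{\mathtt{avg}}}\frac{d\beta_\mathtt{P}^d}{\gamma+d\Theta}+\sum_{d\ge d^\star}\frac{d m_d}{d^{\mathtt{avg}}}\frac{\alpha d\beta_\mathtt{P}^d}{\gamma+\alpha d\Theta}$; and $\Theta_{\mathtt{EE}}(d^\star):=0$ if $\mathcal{R}(d^\star)\le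 1$. The switched dynamics models the SIS epidemic when susceptible agents of degree $d$ adopt protection (reducing infection probability by factor $\alpha$) exactly when $\Theta(\mathbf{y})$ exceeds $\Theta^d_{th}$, and infected agents always adopt protection (transmission rate $\beta_\mathtt{P}^d$). *)

theory Defs
  imports Main "HOL.Real"
begin

text \<open>State vectors y are functions nat => real that are
  zero outside D (so that equality of vectors is equality on D).\<close>

definition davg :: "nat \<Rightarrow> (nat \<Rightarrow> real) \<Rightarrow> real" where
  "davg dmax m = (\<Sum>d=1..dmax. real d * m d)"

definition Theta :: "nat \<Rightarrow> (nat \<Rightarrow> real) \<Rightarrow> (nat \<Rightarrow> real) \<Rightarrow> (nat \<Rightarrow> real) \<Rightarrow> real" where
  "Theta dmax m beta y = (\<Sum>d=1..dmax. real d * m d / davg dmax m * beta d * y d)"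

definition th :: "nat \<Rightarrow> real \<Rightarrow> real \<Rightarrow> real \<Rightarrow> nat \<Rightarrow> real" where
  "th dmax alpha cP L d = (if d = dmax + 1 then 0 else cP / (L * (1 - alpha) * real d))"

definition dmin :: "nat \<Rightarrow> real \<Rightarrow> real \<Rightarrow> real \<Rightarrow> nat" where
  "dmin dmax alpha cP L = (LEAST d. 1 \<le> d \<and> d \<le> dmax \<and> th dmax alpha cP L d < 1)"

definition Ival :: "nat \<Rightarrow> real \<Rightarrow> real \<Rightarrow> real \<Rightarrow> nat \<Rightarrow> real set" where
  "Ival dmax alpha cP L d =
     (if d = dmax + 1 then {0 ..< th dmax alpha cP L dmax}
      else if d = dmin dmax alpha cP L then {th dmax alpha cP L d <.. 1}
      else {th dmax alpha cP L d <..< th dmax alpha cP L (d - 1)})"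

definition box :: "nat \<Rightarrow> (nat \<Rightarrow> real) set" where
  "box dmax = {y. (\<forall>d\<in>{1..dmax}. 0 \<le> y d \<and> y d \<le> 1) \<and> (\<forall>d. d \<notin> {1..dmax} \<longrightarrow> y d = 0)}"

definition Rnum :: "nat \<Rightarrow> (nat \<Rightarrow> real) \<Rightarrow> (nat \<Rightarrow> real) \<Rightarrow> real \<Rightarrow> real \<Rightarrow> nat \<Rightarrow> real" where
  "Rnum dmax m beta alpha gamma ds =
     (\<Sum>d=1..ds - 1. (real d)^2 * m d * beta d / (davg dmax m * gamma))
   + (\<Sum>d=ds..dmax. alpha * (real d)^2 * m d * beta d / (davg dmax m * gamma))"

definition ThetaEE :: "nat \<Rightarrow> (nat \<Rightarrow> real) \<Rightarrow> (nat \<Rightarrow> real) \<Rightarrow> real \<Rightarrow> real \<Rightarrow> nat \<Rightarrow> real" where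
  "ThetaEE dmax m beta alpha gamma ds =
     (if Rnum dmax m beta alpha gamma ds > 1 then
        (THE T. T > 0 \<and>
          1 = (\<Sum>d=1..ds - 1. real d * m d / davg dmax m * (real d * beta d / (gamma + real d * T)))
            + (\<Sum>d=ds..dmax. real d * m d / davg dmax m * (alpha * real d * beta d / (gamma + alpha * real d * T))))
      else 0)"

definition kappa :: "real \<Rightarrow> nat \<Rightarrow> nat \<Rightarrow> real" where
  "kappa alpha ds d = (if d < ds then 1 else alpha)"

definition fixed_eq :: "nat \<Rightarrow> (nat \<Rightarrow> real) \<Rightarrow> (nat \<Rightarrow> real) \<Rightarrow> real \<Rightarrow> real \<Rightarrow> nat \<Rightarrow> (nat \<Rightarrow> real) \<Rightarrow> bool" where
  "fixed_eq dmax m beta alpha gamma ds y \<longleftrightarrow> y \<in> box dmax \<and>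
     (\<forall>d\<in>{1..dmax}. 0 = - gamma * y d + (1 - y d) * kappa alpha ds d * real d * Theta dmax m beta y)"

definition yEE :: "nat \<Rightarrow> (nat \<Rightarrow> real) \<Rightarrow> (nat \<Rightarrow> real) \<Rightarrow> real \<Rightarrow> real \<Rightarrow> nat \<Rightarrow> (nat \<Rightarrow> real)" where
  "yEE dmax m beta alpha gamma ds = (THE y. fixed_eq dmax m beta alpha gamma ds y \<and> y \<noteq> (\<lambda>_. 0))"

definition sw_eq :: "nat \<Rightarrow> (nat \<Rightarrow> real) \<Rightarrow> (nat \<Rightarrow> real) \<Rightarrow> real \<Rightarrow> real \<Rightarrow> real \<Rightarrow> real \<Rightarrow> (nat \<Rightarrow> real) \<Rightarrow> bool" where
  "sw_eq dmax m beta alpha gamma cP L y \<longleftrightarrow> y \<in> box dmax \<and>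
     (\<forall>d\<in>{1..dmax}. \<exists>z. 0 \<le> z \<and> z \<le> 1 \<and>
        (Theta dmax m beta y < th dmax alpha cP L d \<longrightarrow> z = 1) \<and>
        (Theta dmax m beta y > th dmax alpha cP L d \<longrightarrow> z = 0) \<and>
        0 = - gamma * y d + (1 - y d) * (z + alpha * (1 - z)) * real d * Theta dmax m beta y)"

definition endemic_eq :: "nat \<Rightarrow> (nat \<Rightarrow> real) \<Rightarrow> (nat \<Rightarrow> real) \<Rightarrow> real \<Rightarrow> real \<Rightarrow> real \<Rightarrow> real \<Rightarrow> (nat \<Rightarrow> real) \<Rightarrow> bool" where
  "endemic_eq dmax m beta alpha gamma cP L y \<longleftrightarrow> sw_eq dmax m beta alpha gamma cP L y \<and> y \<noteq> (\<lambda>_. 0)"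

definition deq :: "nat \<Rightarrow> (nat \<Rightarrow> real) \<Rightarrow> (nat \<Rightarrow> real) \<Rightarrow> real \<Rightarrow> real \<Rightarrow> real \<Rightarrow> real \<Rightarrow> nat" where
  "deq dmax m beta alpha gamma cP L =
     (LEAST d. dmin dmax alpha cP L \<le> d \<and> d \<le> dmax + 1 \<and>
        ThetaEE dmax m beta alpha gamma d > th dmax alpha cP L d)"

end

theory Submission imports Defs Complex_Main begin

text \<open>An equilibrium with \<open>\<Theta> y = t > 0\<close> is determined by its infection factors
  \<open>s d \<in> [alpha, 1]\<close>: \<open>y d = s d * d * t / (gamma + s d * d * t)\<close>, and the consistency
  condition \<open>\<Theta> y = t\<close> reads \<open>balance s t = 1\<close>, where \<open>balance\<close> is strictly decreasing
  in \<open>t\<close> and increasing in \<open>s\<close>. Since protection is adopted as \<open>\<Theta>\<close> grows, admissible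
  factors decrease with \<open>t\<close>, so all endemic equilibria share one value of \<open>\<Theta>\<close>; if
  \<open>R(dmax + 1) \<le> 1\<close>, already \<open>balance\<close> at \<open>t = 0\<close> is too small for any. Otherwise
  \<open>deq\<close> locates that value: strictly between two thresholds the factors are \<open>kappa alpha deq\<close>,
  and at the threshold of degree \<open>k = deq - 1\<close> only degree \<open>k\<close> mixes, its factor being
  found by the intermediate value theorem and, given the others, fixed by \<open>\<Theta> y = thr k\<close>.\<close>

lemma saturation_antimono:
  fixes a a' g t t' :: real
  assumes "0 < a'" "a' \<le> a" "0 \<le> t" "t \<le> t'" "0 < g"
  shows "a' / (g + a' * t') \<le> a / (g + a * t)"
proof -
  have "a' * g \<le> a * g" "a' * a * t \<le> a' * a * t'"
    using assms by (auto intro: mult_left_mono)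
  then have "a' * (g + a * t) \<le> a * (g + a' * t')"
    by (simp add: algebra_simps)
  moreover have "0 < g + a' * t'" "0 < g + a * t"
    using assms by (auto intro: add_pos_nonneg)
  ultimately show ?thesis by (simp add: divide_simps)
qed

lemma saturation_strict_antimono:
  fixes a a' g t t' :: real
  assumes "0 < a'" "a' \<le> a" "0 \<le> t" "t < t'" "0 < g"
  shows "a' / (g + a' * t') < a / (g + a * t)"
proof -
  have "a' * g \<le> a * g" "a' * a * t < a' * a * t'"
    using assms by (auto intro: mult_strict_left_mono)
  then have "a' * (g + a * t) < a * (g + a' * t')"
    by (simp add: algebra_simps)
  moreover have "0 < g + a' * t'" "0 < g + a * t"
    using assms by (auto intro: add_pos_nonneg)
  ultimately show ?thesis by (simp add: divide_simps)
qed

lemma steady_state_iff: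
  fixes y c g :: real
  assumes "0 < g" "0 \<le> c"
  shows "0 = - g * y + (1 - y) * c \<longleftrightarrow> y = c / (g + c)"
  using assms by (auto simp: field_simps)

lemma mixed_rate_bounds:
  fixes alpha z :: real
  assumes "alpha < 1" "0 \<le> z" "z \<le> 1"
  shows "alpha \<le> z + alpha * (1 - z)" "z + alpha * (1 - z) \<le> 1"
proof -
  have "0 \<le> z * (1 - alpha)" "z * (1 - alpha) \<le> 1 - alpha"
    using assms by (auto intro: mult_left_le_one_le)
  then show "alpha \<le> z + alpha * (1 - z)" "z + alpha * (1 - z) \<le> 1"
    by (simp_all add: algebra_simps)
qed

lemma mixed_rate_inverse:
  fixes alpha s :: real
  assumes "alpha < 1" "alpha \<le> s" "s \<le> 1"
  defines "z \<equiv> (s - alpha) / (1 - alpha)"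
  shows "z + alpha * (1 - z) = s" "0 \<le> z" "z \<le> 1"
    "s = 1 \<Longrightarrow> z = 1" "s = alpha \<Longrightarrow> z = 0"
proof -
  have "z * (1 - alpha) = s - alpha" using assms by simp
  then show "z + alpha * (1 - z) = s" by (simp add: algebra_simps)
  show "0 \<le> z" "z \<le> 1" "s = 1 \<Longrightarrow> z = 1" "s = alpha \<Longrightarrow> z = 0"
    using assms by (auto simp: divide_simps)
qed

locale sis_network =
  fixes dmax :: nat and m beta :: "nat \<Rightarrow> real" and alpha gamma cP L :: real
  assumes dmax_pos: "dmax \<ge> 1"
    and m_pos: "\<forall>d\<in>{1..dmax}. m d > 0"
    and alpha_pos: "0 < alpha" and alpha_less_1: "alpha < 1"
    and gamma_pos: "0 < gamma"
    and beta_range: "\<forall>d\<in>{1..dmax}. 0 < beta d \<and> beta d < 1"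
    and cP_pos: "cP > 0" and L_pos: "L > 0"
    and some_th_less_1: "\<exists>d\<in>{1..dmax}. th dmax alpha cP L d < 1"
begin

abbreviation "\<Theta> \<equiv> Theta dmax m beta"
abbreviation "thr \<equiv> th dmax alpha cP L"
abbreviation "endemic \<equiv> endemic_eq dmax m beta alpha gamma cP L"

definition weight :: "nat \<Rightarrow> real" where
  "weight d = real d * m d / davg dmax m"

text \<open>\<open>s d\<close> is the infection factor of degree \<open>d\<close>: \<open>1\<close> if unprotected, \<open>alpha\<close> if
  protected, in between if agents at their threshold mix. \<open>profile s t\<close> solves the
  equilibrium equations with \<open>\<Theta>\<close> frozen at \<open>t\<close>.\<close>

definition balance :: "(nat \<Rightarrow> real) \<Rightarrow> real \<Rightarrow> real" where
  "balance s t = (\<Sum>d=1..dmax. weight d * (s d * real d * beta d / (gamma + s d * real d * t)))"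

definition profile :: "(nat \<Rightarrow> real) \<Rightarrow> real \<Rightarrow> nat \<Rightarrow> real" where
  "profile s t d = (if d \<in> {1..dmax} then s d * real d * t / (gamma + s d * real d * t) else 0)"

definition admissible :: "(nat \<Rightarrow> real) \<Rightarrow> real \<Rightarrow> bool" where
  "admissible s t \<longleftrightarrow> (\<forall>d\<in>{1..dmax}. alpha \<le> s d \<and> s d \<le> 1 \<and>
      (t < thr d \<longrightarrow> s d = 1) \<and> (t > thr d \<longrightarrow> s d = alpha))"

lemma davg_pos: "davg dmax m > 0"
  unfolding davg_def using dmax_pos m_pos by (intro sum_pos) auto

lemma weight_pos: "d \<in> {1..dmax} \<Longrightarrow> weight d > 0"
  using davg_pos m_pos by (auto simp: weight_def)

lemma sum_weight: "(\<Sum>d=1..dmax. weight d) = 1"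
  using davg_pos by (simp add: weight_def davg_def flip: sum_divide_distrib)

lemma Theta_eq_weighted_sum: "\<Theta> y = (\<Sum>d=1..dmax. weight d * beta d * y d)"
  by (simp add: Theta_def weight_def)

lemma th_nonneg: "thr d \<ge> 0"
  using cP_pos L_pos alpha_less_1 by (auto simp: th_def)

lemma th_pos: "d \<in> {1..dmax} \<Longrightarrow> thr d > 0"
  using cP_pos L_pos alpha_less_1 by (auto simp: th_def)

lemma th_strict_antimono:
  assumes "1 \<le> d" "d < d'" "d' \<le> dmax + 1"
  shows "thr d' < thr d"
proof (cases "d' = dmax + 1")
  case True
  then show ?thesis using th_pos[of d] assms by (simp add: th_def)
next
  case False
  have "0 < L * (1 - alpha)" using L_pos alpha_less_1 by simp
  then have "0 < L * (1 - alpha) * real d" "L * (1 - alpha) * real d < L * (1 - alpha) * real d'"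
    using assms by (auto intro: mult_strict_left_mono)
  then show ?thesis
    using False assms cP_pos by (simp add: th_def divide_strict_left_mono)
qed

lemma th_antimono: "1 \<le> d \<Longrightarrow> d \<le> d' \<Longrightarrow> d' \<le> dmax + 1 \<Longrightarrow> thr d' \<le> thr d"
  using th_strict_antimono by (cases "d = d'") (auto intro: less_imp_le)

lemma dmin_in_degrees: "dmin dmax alpha cP L \<in> {1..dmax}"
  and th_dmin_less_1: "thr (dmin dmax alpha cP L) < 1"
  and th_below_dmin: "1 \<le> d \<Longrightarrow> d < dmin dmax alpha cP L \<Longrightarrow> thr d \<ge> 1"
proof -
  have ex: "\<exists>d. 1 \<le> d \<and> d \<le> dmax \<and> thr d < 1" using some_th_less_1 by auto
  show "dmin dmax alpha cP L \<in> {1..dmax}" "thr (dmin dmax alpha cP L) < 1"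
    using LeastI_ex[OF ex] by (auto simp: dmin_def)
  show "1 \<le> d \<Longrightarrow> d < dmin dmax alpha cP L \<Longrightarrow> thr d \<ge> 1"
    using not_less_Least[of d "\<lambda>d. 1 \<le> d \<and> d \<le> dmax \<and> thr d < 1"] LeastI_ex[OF ex]
    by (auto simp: dmin_def)
qed

lemma kappa_pos: "0 < kappa alpha ds d"
  using alpha_pos by (simp add: kappa_def)

lemma sum_split_kappa:
  assumes "1 \<le> ds" "ds \<le> dmax + 1"
  shows "(\<Sum>d=1..ds - 1. f d 1) + (\<Sum>d=ds..dmax. f d alpha) = (\<Sum>d=1..dmax. f d (kappa alpha ds d))"
proof -
  have "{1..dmax} = {1..ds - 1} \<union> {ds..dmax}" "{1..ds - 1} \<inter> {ds..dmax} = {}"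
    using assms by auto
  then have "(\<Sum>d=1..dmax. f d (kappa alpha ds d)) =
      (\<Sum>d=1..ds - 1. f d (kappa alpha ds d)) + (\<Sum>d=ds..dmax. f d (kappa alpha ds d))"
    by (metis finite_atLeastAtMost sum.union_disjoint)
  also have "\<dots> = (\<Sum>d=1..ds - 1. f d 1) + (\<Sum>d=ds..dmax. f d alpha)"
    using assms by (auto intro!: sum.cong arg_cong2[where f = "(+)"] simp: kappa_def)
  finally show ?thesis by simp
qed

lemma Rnum_eq_balance:
  assumes "1 \<le> ds" "ds \<le> dmax + 1"
  shows "Rnum dmax m beta alpha gamma ds = balance (kappa alpha ds) 0"
proof -
  let ?f = "\<lambda>d k. k * (real d)\<^sup>2 * m d * beta d / (davg dmax m * gamma)"
  have "Rnum dmax m beta alpha gamma ds = (\<Sum>d=1..ds - 1. ?f d 1) + (\<Sum>d=ds..dmax. ?f d alpha)"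
    by (simp add: Rnum_def)
  also have "\<dots> = (\<Sum>d=1..dmax. ?f d (kappa alpha ds d))"
    by (rule sum_split_kappa[OF assms])
  also have "\<dots> = balance (kappa alpha ds) 0"
    unfolding balance_def weight_def by (intro sum.cong) (auto simp: power2_eq_square)
  finally show ?thesis .
qed

lemma ThetaEE_eq_THE_balance:
  assumes "1 \<le> ds" "ds \<le> dmax + 1" "Rnum dmax m beta alpha gamma ds > 1"
  shows "ThetaEE dmax m beta alpha gamma ds = (THE T. T > 0 \<and> 1 = balance (kappa alpha ds) T)"
proof -
  let ?f = "\<lambda>T d k. weight d * (k * real d * beta d / (gamma + k * real d * T))"
  have "(\<Sum>d=1..ds - 1. real d * m d / davg dmax m * (real d * beta d / (gamma + real d * T)))
      + (\<Sum>d=ds..dmax. real d * m d / davg dmax m * (alpha * real d * beta d / (gamma + alpha * real d * T)))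
      = balance (kappa alpha ds) T" for T
    using sum_split_kappa[OF assms(1,2), of "?f T"] by (simp add: balance_def weight_def)
  then show ?thesis using assms(3) by (simp add: ThetaEE_def)
qed

lemma balance_antimono:
  assumes "\<forall>d\<in>{1..dmax}. 0 < s' d \<and> s' d \<le> s d" "0 \<le> t" "t \<le> t'"
  shows "balance s' t' \<le> balance s t"
  unfolding balance_def
proof (rule sum_mono)
  fix d assume d: "d \<in> {1..dmax}"
  have "beta d * (s' d * real d / (gamma + s' d * real d * t'))
      \<le> beta d * (s d * real d / (gamma + s d * real d * t))"
    using assms d beta_range gamma_pos
    by (intro mult_left_mono saturation_antimono) (auto intro: mult_right_mono less_imp_le)
  then show "weight d * (s' d * real d * beta d / (gamma + s' d * real d * t'))
      \<le> weight d * (s d * real d * beta d / (gamma + s d * real d * t))"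
    using weight_pos[OF d] by (intro mult_left_mono) (auto simp: ac_simps)
qed

lemma balance_strict_antimono:
  assumes "\<forall>d\<in>{1..dmax}. 0 < s' d \<and> s' d \<le> s d" "0 \<le> t" "t < t'"
  shows "balance s' t' < balance s t"
  unfolding balance_def
proof (rule sum_strict_mono)
  show "{1..dmax} \<noteq> {}" using dmax_pos by simp
  fix d assume d: "d \<in> {1..dmax}"
  have "beta d * (s' d * real d / (gamma + s' d * real d * t'))
      < beta d * (s d * real d / (gamma + s d * real d * t))"
    using assms d beta_range gamma_pos
    by (intro mult_strict_left_mono saturation_strict_antimono) (auto intro: mult_right_mono)
  then show "weight d * (s' d * real d * beta d / (gamma + s' d * real d * t'))
      < weight d * (s d * real d * beta d / (gamma + s d * real d * t))"
    using weight_pos[OF d] by (intro mult_strict_left_mono) (auto simp: ac_simps)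
qed (simp)

lemma balance_at_1_less_1:
  assumes "\<forall>d\<in>{1..dmax}. 0 < s d"
  shows "balance s 1 < 1"
proof -
  have "balance s 1 < (\<Sum>d=1..dmax. weight d * beta d)"
    unfolding balance_def
  proof (rule sum_strict_mono)
    show "{1..dmax} \<noteq> {}" using dmax_pos by simp
    fix d assume d: "d \<in> {1..dmax}"
    have "0 < s d * real d" using assms d by simp
    then have "s d * real d * beta d / (gamma + s d * real d * 1) < beta d"
      using d gamma_pos beta_range by (simp add: divide_simps algebra_simps)
    then show "weight d * (s d * real d * beta d / (gamma + s d * real d * 1)) < weight d * beta d"
      using weight_pos[OF d] by (intro mult_strict_left_mono)
  qed (simp)
  also have "\<dots> \<le> (\<Sum>d=1..dmax. weight d)"
    using beta_range weight_pos by (intro sum_mono) (auto intro: less_imp_le)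
  finally show ?thesis using sum_weight by simp
qed

lemma balance_continuous_on:
  fixes s :: "real \<Rightarrow> nat \<Rightarrow> real" and t :: "real \<Rightarrow> real"
  assumes "\<And>d. continuous_on S (\<lambda>x. s x d)" "continuous_on S t"
    and "\<And>x d. x \<in> S \<Longrightarrow> d \<in> {1..dmax} \<Longrightarrow> 0 \<le> s x d"
    and "\<And>x. x \<in> S \<Longrightarrow> 0 \<le> t x"
  shows "continuous_on S (\<lambda>x. balance (s x) (t x))"
  unfolding balance_def
proof (intro continuous_on_sum)
  fix d assume d: "d \<in> {1..dmax}"
  have "gamma + s x d * real d * t x \<noteq> 0" if "x \<in> S" for x
    using assms(3)[OF that d] assms(4)[OF that] gamma_pos
    by (metis add_pos_nonneg less_irrefl mult_nonneg_nonneg of_nat_0_le_iff)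
  then show "continuous_on S (\<lambda>x. weight d * (s x d * real d * beta d / (gamma + s x d * real d * t x)))"
    by (intro continuous_intros assms) auto
qed

lemma balance_eq_1_unique:
  assumes "\<forall>d\<in>{1..dmax}. 0 < s d" "T1 > 0" "T2 > 0" "balance s T1 = 1" "balance s T2 = 1"
  shows "T1 = T2"
  using balance_strict_antimono[of s s T1 T2] balance_strict_antimono[of s s T2 T1] assms
  by (cases T1 T2 rule: linorder_cases) auto

lemma ThetaEE_root:
  assumes ds: "1 \<le> ds" "ds \<le> dmax + 1" and R: "Rnum dmax m beta alpha gamma ds > 1"
  shows "0 < ThetaEE dmax m beta alpha gamma ds" "ThetaEE dmax m beta alpha gamma ds < 1"
    "balance (kappa alpha ds) (ThetaEE dmax m beta alpha gamma ds) = 1"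
proof -
  let ?k = "kappa alpha ds"
  have kp: "\<forall>d\<in>{1..dmax}. 0 < ?k d" using kappa_pos by simp
  have at0: "balance ?k 0 > 1" using R Rnum_eq_balance[OF ds] by simp
  have at1: "balance ?k 1 < 1" using balance_at_1_less_1[OF kp] .
  have "continuous_on {0..1} (balance ?k)"
    using balance_continuous_on[of "{0..1}" "\<lambda>_. ?k" id] kappa_pos
    by (simp add: less_imp_le)
  then obtain T where T: "0 \<le> T" "T \<le> 1" "balance ?k T = 1"
    using IVT2'[of "balance ?k" 1 1 0] at0 at1 by auto
  have "T \<noteq> 0" "T \<noteq> 1" using T at0 at1 by auto
  with T have T01: "0 < T" "T < 1" by auto
  have "ThetaEE dmax m beta alpha gamma ds = T"
    unfolding ThetaEE_eq_THE_balance[OF ds R]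
    using T T01 balance_eq_1_unique[OF kp] by (intro the_equality) auto
  then show "0 < ThetaEE dmax m beta alpha gamma ds" "ThetaEE dmax m beta alpha gamma ds < 1"
    "balance ?k (ThetaEE dmax m beta alpha gamma ds) = 1" using T T01 by auto
qed

lemma ThetaEE_eqI:
  assumes ds: "1 \<le> ds" "ds \<le> dmax + 1" and T: "T > 0" "balance (kappa alpha ds) T = 1"
  shows "ThetaEE dmax m beta alpha gamma ds = T"
proof -
  have "balance (kappa alpha ds) T < balance (kappa alpha ds) 0"
    using T kappa_pos by (intro balance_strict_antimono) auto
  then have "Rnum dmax m beta alpha gamma ds > 1"
    using T Rnum_eq_balance[OF ds] by simp
  then show ?thesis
    using balance_eq_1_unique ThetaEE_root[OF ds] T kappa_pos by blast
qed

lemma Theta_profile: "\<Theta> (profile s t) = t * balance s t"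
  unfolding Theta_eq_weighted_sum balance_def profile_def sum_distrib_left
  by (intro sum.cong) (auto simp: ac_simps)

lemma profile_in_box:
  assumes "\<forall>d\<in>{1..dmax}. 0 < s d" "0 \<le> t"
  shows "profile s t \<in> box dmax"
proof -
  have "0 \<le> profile s t d \<and> profile s t d \<le> 1" if d: "d \<in> {1..dmax}" for d
  proof -
    have "0 \<le> s d * real d * t" using assms d by (simp add: less_imp_le)
    then show ?thesis using d gamma_pos by (auto simp: profile_def divide_simps)
  qed
  then show ?thesis by (auto simp: box_def profile_def)
qed

lemma profile_nonzero:
  assumes "\<forall>d\<in>{1..dmax}. 0 < s d" "0 < t"
  shows "profile s t \<noteq> (\<lambda>_. 0)"
proof
  assume "profile s t = (\<lambda>_. 0)"
  then have "profile s t 1 = 0" by simp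
  moreover have "0 < s 1 * real 1 * t" using assms dmax_pos by auto
  ultimately show False using dmax_pos gamma_pos by (auto simp: profile_def)
qed

lemma profile_solves_equilibrium:
  assumes "\<forall>d\<in>{1..dmax}. 0 < s d" "0 < t" "balance s t = 1"
  shows "\<Theta> (profile s t) = t"
    "\<forall>d\<in>{1..dmax}. 0 = - gamma * profile s t d + (1 - profile s t d) * s d * real d * \<Theta> (profile s t)"
proof -
  show Theta: "\<Theta> (profile s t) = t" using Theta_profile assms by simp
  have "0 = - gamma * profile s t d + (1 - profile s t d) * (s d * real d * t)"
    if d: "d \<in> {1..dmax}" for d
  proof -
    have "0 \<le> s d * real d * t" using assms d by (simp add: less_imp_le)
    then show ?thesis by (subst steady_state_iff[OF gamma_pos]) (use d in \<open>simp_all add: profile_def\<close>)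
  qed
  then show "\<forall>d\<in>{1..dmax}. 0 = - gamma * profile s t d + (1 - profile s t d) * s d * real d * \<Theta> (profile s t)"
    by (simp add: Theta ac_simps)
qed

lemma equilibrium_is_profile:
  assumes box: "y \<in> box dmax" and s_pos: "\<forall>d\<in>{1..dmax}. 0 < s d"
    and eq: "\<forall>d\<in>{1..dmax}. 0 = - gamma * y d + (1 - y d) * s d * real d * \<Theta> y"
    and nz: "y \<noteq> (\<lambda>_. 0)"
  shows "y = profile s (\<Theta> y)" "0 < \<Theta> y" "balance s (\<Theta> y) = 1"
proof -
  have Theta_nonneg: "0 \<le> \<Theta> y"
    unfolding Theta_eq_weighted_sum using box beta_range weight_pos
    by (intro sum_nonneg) (auto simp: box_def less_imp_le)
  have "y d = profile s (\<Theta> y) d" for d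
  proof (cases "d \<in> {1..dmax}")
    case True
    then have "0 = - gamma * y d + (1 - y d) * (s d * real d * \<Theta> y)" "0 \<le> s d * real d * \<Theta> y"
      using eq s_pos Theta_nonneg by (simp_all add: ac_simps less_imp_le)
    then show ?thesis
      using True gamma_pos steady_state_iff by (simp add: profile_def)
  next
    case False
    then show ?thesis using box by (auto simp: box_def profile_def)
  qed
  then show y: "y = profile s (\<Theta> y)" by auto
  show pos: "0 < \<Theta> y"
  proof (rule ccontr)
    assume "\<not> 0 < \<Theta> y"
    then have "\<Theta> y = 0" using Theta_nonneg by simp
    then have "y = (\<lambda>_. 0)" by (subst y) (simp add: profile_def fun_eq_iff)
    then show False using nz by simp
  qed
  have "\<Theta> y = \<Theta> y * balance s (\<Theta> y)" using Theta_profile[of s "\<Theta> y"] y by simp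
  then show "balance s (\<Theta> y) = 1" using pos by simp
qed

lemma admissible_pos: "admissible s t \<Longrightarrow> \<forall>d\<in>{1..dmax}. 0 < s d"
  using alpha_pos by (auto simp: admissible_def)

text \<open>The switching variable \<open>z\<close> of \<open>sw_eq\<close> enters only through the infection
  factor \<open>s = z + alpha * (1 - z)\<close>, which ranges over \<open>[alpha, 1]\<close>.\<close>

lemma endemic_iff_admissible_profile:
  "endemic y \<longleftrightarrow> (\<exists>s t. 0 < t \<and> admissible s t \<and> balance s t = 1 \<and> y = profile s t)"
proof
  assume "endemic y"
  then have box: "y \<in> box dmax" and nz: "y \<noteq> (\<lambda>_. 0)"
    and ex: "\<forall>d\<in>{1..dmax}. \<exists>z. 0 \<le> z \<and> z \<le> 1 \<and>
        (\<Theta> y < thr d \<longrightarrow> z = 1) \<and> (\<Theta> y > thr d \<longrightarrow> z = 0) \<and>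
        0 = - gamma * y d + (1 - y d) * (z + alpha * (1 - z)) * real d * \<Theta> y"
    by (auto simp: endemic_eq_def sw_eq_def)
  from bchoice[OF ex] obtain z where z: "\<forall>d\<in>{1..dmax}. 0 \<le> z d \<and> z d \<le> 1 \<and>
        (\<Theta> y < thr d \<longrightarrow> z d = 1) \<and> (\<Theta> y > thr d \<longrightarrow> z d = 0) \<and>
        0 = - gamma * y d + (1 - y d) * (z d + alpha * (1 - z d)) * real d * \<Theta> y"
    by blast
  define s where "s d = z d + alpha * (1 - z d)" for d
  have adm: "admissible s (\<Theta> y)"
    using z mixed_rate_bounds[OF alpha_less_1] by (auto simp: admissible_def s_def)
  have "\<forall>d\<in>{1..dmax}. 0 = - gamma * y d + (1 - y d) * s d * real d * \<Theta> y"
    using z by (simp add: s_def)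
  note profile = equilibrium_is_profile[OF box admissible_pos[OF adm] this nz]
  show "\<exists>s t. 0 < t \<and> admissible s t \<and> balance s t = 1 \<and> y = profile s t"
    using adm profile by blast
next
  assume "\<exists>s t. 0 < t \<and> admissible s t \<and> balance s t = 1 \<and> y = profile s t"
  then obtain s t where t: "0 < t" and adm: "admissible s t" and bal: "balance s t = 1"
    and y: "y = profile s t" by blast
  note s_pos = admissible_pos[OF adm]
  note sol = profile_solves_equilibrium[OF s_pos t bal, folded y]
  have "\<exists>z. 0 \<le> z \<and> z \<le> 1 \<and>
        (\<Theta> y < thr d \<longrightarrow> z = 1) \<and> (\<Theta> y > thr d \<longrightarrow> z = 0) \<and>
        0 = - gamma * y d + (1 - y d) * (z + alpha * (1 - z)) * real d * \<Theta> y"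
    if d: "d \<in> {1..dmax}" for d
  proof -
    have "alpha \<le> s d" "s d \<le> 1" "t < thr d \<longrightarrow> s d = 1" "t > thr d \<longrightarrow> s d = alpha"
      using adm d by (auto simp: admissible_def)
    then show ?thesis
      using mixed_rate_inverse[OF alpha_less_1, of "s d"] sol d
      by (intro exI[of _ "(s d - alpha) / (1 - alpha)"]) auto
  qed
  then show "endemic y"
    using profile_in_box[OF s_pos] profile_nonzero[OF s_pos t] t y
    by (auto simp: endemic_eq_def sw_eq_def)
qed

text \<open>A larger \<open>\<Theta>\<close> switches more agents to protection, which lowers \<open>balance\<close> in
  both arguments, so two endemic equilibria cannot have different \<open>\<Theta>\<close>.\<close>

lemma admissible_balance_Theta_unique:
  assumes "admissible s t" "admissible s' t'" "0 < t" "0 < t'" "balance s t = 1" "balance s' t' = 1"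
  shows "t = t'"
proof -
  have False if "admissible s t" "admissible s' t'" "0 < t" "t < t'" "balance s t = 1" "balance s' t' = 1"
    for s t s' t'
  proof -
    have "\<forall>d\<in>{1..dmax}. 0 < s' d \<and> s' d \<le> s d"
    proof
    fix d assume d: "d \<in> {1..dmax}"
    have "s' d \<le> s d"
      using that(1,2,4) d by (cases "t < thr d") (auto simp: admissible_def)
    then show "0 < s' d \<and> s' d \<le> s d" using admissible_pos[OF that(2)] d by blast
  qed
    then have "balance s' t' < balance s t" using that by (intro balance_strict_antimono) auto
    then show False using that by simp
  qed
  then show ?thesis using assms by (cases t t' rule: linorder_cases) blast+
qed

lemma sw_eq_iff_disease_free:
  assumes R: "Rnum dmax m beta alpha gamma (dmax + 1) \<le> 1"
  shows "sw_eq dmax m beta alpha gamma cP L y \<longleftrightarrow> y = (\<lambda>_. 0)"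
proof
  assume sw: "sw_eq dmax m beta alpha gamma cP L y"
  show "y = (\<lambda>_. 0)"
  proof (rule ccontr)
    assume "y \<noteq> (\<lambda>_. 0)"
    with sw have "endemic y" by (simp add: endemic_eq_def)
    then obtain s t where st: "0 < t" "admissible s t" "balance s t = 1"
      using endemic_iff_admissible_profile by blast
    have "\<forall>d\<in>{1..dmax}. 0 < s d \<and> s d \<le> kappa alpha (dmax + 1) d"
      using st(2) alpha_pos by (auto simp: admissible_def kappa_def)
    then have "balance s t < balance (kappa alpha (dmax + 1)) 0"
      using st by (intro balance_strict_antimono) auto
    then show False using R st Rnum_eq_balance[of "dmax + 1"] by simp
  qed
next
  assume "y = (\<lambda>_. 0)"
  moreover have "\<Theta> (\<lambda>_. 0) = 0" by (simp add: Theta_def)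
  ultimately show "sw_eq dmax m beta alpha gamma cP L y"
    using th_nonneg by (simp add: sw_eq_def box_def) (metis order.refl zero_le_one not_less)
qed

lemma endemic_is_profile_at:
  assumes "endemic y" "admissible s0 t0" "0 < t0" "balance s0 t0 = 1"
  obtains s where "admissible s t0" "y = profile s t0" "\<Theta> y = t0"
proof -
  obtain s t where st: "0 < t" "admissible s t" "balance s t = 1" "y = profile s t"
    using assms(1) endemic_iff_admissible_profile by blast
  then have "t = t0" using admissible_balance_Theta_unique assms(2-4) by blast
  then show thesis
    using that st profile_solves_equilibrium(1)[OF admissible_pos[OF st(2)] st(1,3)] by blast
qed

lemma fixed_eq_nonzero_iff_profile:
  assumes ds: "1 \<le> ds" "ds \<le> dmax + 1" and R: "Rnum dmax m beta alpha gamma ds > 1"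
  shows "fixed_eq dmax m beta alpha gamma ds y \<and> y \<noteq> (\<lambda>_. 0) \<longleftrightarrow>
     y = profile (kappa alpha ds) (ThetaEE dmax m beta alpha gamma ds)"
proof
  have kp: "\<forall>d\<in>{1..dmax}. 0 < kappa alpha ds d" using kappa_pos by simp
  {
    assume "fixed_eq dmax m beta alpha gamma ds y \<and> y \<noteq> (\<lambda>_. 0)"
    then have "y \<in> box dmax" "y \<noteq> (\<lambda>_. 0)"
      "\<forall>d\<in>{1..dmax}. 0 = - gamma * y d + (1 - y d) * kappa alpha ds d * real d * \<Theta> y"
      by (auto simp: fixed_eq_def)
    note y = equilibrium_is_profile[OF this(1) kp this(3,2)]
    then show "y = profile (kappa alpha ds) (ThetaEE dmax m beta alpha gamma ds)"
      using ThetaEE_eqI[OF ds y(2,3)] by simp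
  next
    assume y: "y = profile (kappa alpha ds) (ThetaEE dmax m beta alpha gamma ds)"
    note root = ThetaEE_root[OF ds R]
    show "fixed_eq dmax m beta alpha gamma ds y \<and> y \<noteq> (\<lambda>_. 0)"
      using profile_in_box[OF kp] profile_nonzero[OF kp root(1)]
        profile_solves_equilibrium(2)[OF kp root(1,3)] root(1) y
      by (auto simp: fixed_eq_def)
  }
qed

lemma yEE_eq_profile:
  assumes "1 \<le> ds" "ds \<le> dmax + 1" "Rnum dmax m beta alpha gamma ds > 1"
  shows "yEE dmax m beta alpha gamma ds = profile (kappa alpha ds) (ThetaEE dmax m beta alpha gamma ds)"
  unfolding yEE_def using fixed_eq_nonzero_iff_profile[OF assms] by (intro the_equality) auto

lemma balance_kappa_le_1:
  assumes "1 \<le> ds" "ds \<le> dmax + 1" "ThetaEE dmax m beta alpha gamma ds \<le> t" "0 < t"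
  shows "balance (kappa alpha ds) t \<le> 1"
proof (cases "Rnum dmax m beta alpha gamma ds > 1")
  case True
  note root = ThetaEE_root[OF assms(1,2) True]
  have "balance (kappa alpha ds) t \<le> balance (kappa alpha ds) (ThetaEE dmax m beta alpha gamma ds)"
    using assms root kappa_pos by (intro balance_antimono) auto
  then show ?thesis using root by simp
next
  case False
  have "balance (kappa alpha ds) t < balance (kappa alpha ds) 0"
    using assms kappa_pos by (intro balance_strict_antimono) auto
  then show ?thesis using False Rnum_eq_balance[OF assms(1,2)] by simp
qed

lemma balance_kappa_ge_1:
  assumes "1 \<le> ds" "ds \<le> dmax + 1" "Rnum dmax m beta alpha gamma ds > 1"
    and "0 \<le> t" "t \<le> ThetaEE dmax m beta alpha gamma ds"
  shows "1 \<le> balance (kappa alpha ds) t"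
  using balance_antimono[of "kappa alpha ds" "kappa alpha ds" t "ThetaEE dmax m beta alpha gamma ds"]
    ThetaEE_root(3)[OF assms(1-3)] assms(4,5) kappa_pos by simp

abbreviation "de \<equiv> deq dmax m beta alpha gamma cP L"

lemma deq_least:
  assumes R: "Rnum dmax m beta alpha gamma (dmax + 1) > 1"
  shows "dmin dmax alpha cP L \<le> de" "de \<le> dmax + 1" "thr de < ThetaEE dmax m beta alpha gamma de"
    "\<And>d. dmin dmax alpha cP L \<le> d \<Longrightarrow> d < de \<Longrightarrow> ThetaEE dmax m beta alpha gamma d \<le> thr d"
proof -
  let ?P = "\<lambda>d. dmin dmax alpha cP L \<le> d \<and> d \<le> dmax + 1 \<and> thr d < ThetaEE dmax m beta alpha gamma d"
  have "?P (dmax + 1)"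
    using dmin_in_degrees ThetaEE_root(1)[OF _ _ R] by (auto simp: th_def)
  then have ex: "\<exists>d. ?P d" by blast
  show "dmin dmax alpha cP L \<le> de" "de \<le> dmax + 1" "thr de < ThetaEE dmax m beta alpha gamma de"
    using LeastI_ex[OF ex] by (auto simp: deq_def)
  show "ThetaEE dmax m beta alpha gamma d \<le> thr d" if "dmin dmax alpha cP L \<le> d" "d < de" for d
    using that not_less_Least[of d ?P] LeastI_ex[OF ex] by (auto simp: deq_def)
qed

lemma deq_pos: "Rnum dmax m beta alpha gamma (dmax + 1) > 1 \<Longrightarrow> 1 \<le> de"
  using deq_least(1) dmin_in_degrees by fastforce

text \<open>\<open>ThetaEE\<close> is \<open>0\<close> unless \<open>Rnum > 1\<close>, so \<open>ThetaEE de > thr de \<ge> 0\<close> forces \<open>Rnum de > 1\<close>.\<close>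

lemma Rnum_deq_gt_1:
  assumes R: "Rnum dmax m beta alpha gamma (dmax + 1) > 1"
  shows "Rnum dmax m beta alpha gamma de > 1"
  using deq_least(3)[OF R] th_nonneg[of de] by (auto simp: ThetaEE_def split: if_splits)

lemma ThetaEE_deq_between_thresholds:
  assumes R: "Rnum dmax m beta alpha gamma (dmax + 1) > 1"
    and I: "ThetaEE dmax m beta alpha gamma de \<in> Ival dmax alpha cP L de"
    and d: "d \<in> {1..dmax}"
  shows "d < de \<Longrightarrow> ThetaEE dmax m beta alpha gamma de < thr d"
    "de \<le> d \<Longrightarrow> thr d < ThetaEE dmax m beta alpha gamma de"
proof -
  let ?T = "ThetaEE dmax m beta alpha gamma de"
  note least = deq_least[OF R]
  show "thr d < ?T" if "de \<le> d"
    using th_antimono[of de d] deq_pos[OF R] that d least(3) by simp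
  show "?T < thr d" if dl: "d < de"
  proof -
    consider "de = dmax + 1" | "de = dmin dmax alpha cP L" | "de \<noteq> dmax + 1" "de \<noteq> dmin dmax alpha cP L"
      by blast
    then show ?thesis
    proof cases
      case 1
      then show ?thesis using I d th_antimono[of d dmax] by (simp add: Ival_def)
    next
      case 2
      then show ?thesis
        using th_below_dmin[of d] dl d ThetaEE_root(2)[OF deq_pos[OF R] least(2) Rnum_deq_gt_1[OF R]]
        by simp
    next
      case 3
      have "thr (de - 1) \<le> thr d" using d dl least(2) by (intro th_antimono) auto
      then show ?thesis using I 3 by (simp add: Ival_def)
    qed
  qed
qed

lemma endemic_iff_yEE_deq:
  assumes R: "Rnum dmax m beta alpha gamma (dmax + 1) > 1"
    and I: "ThetaEE dmax m beta alpha gamma de \<in> Ival dmax alpha cP L de"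
  shows "endemic y \<longleftrightarrow> y = yEE dmax m beta alpha gamma de"
proof -
  define T where "T = ThetaEE dmax m beta alpha gamma de"
  note between = ThetaEE_deq_between_thresholds[OF R I, folded T_def]
  note root = ThetaEE_root[OF deq_pos[OF R] deq_least(2)[OF R] Rnum_deq_gt_1[OF R], folded T_def]
  have yEE: "yEE dmax m beta alpha gamma de = profile (kappa alpha de) T"
    unfolding T_def by (rule yEE_eq_profile[OF deq_pos[OF R] deq_least(2)[OF R] Rnum_deq_gt_1[OF R]])
  text \<open>\<open>T\<close> avoids every threshold, so the switching pattern at \<open>T\<close> is forced to be \<open>kappa alpha de\<close>.\<close>
  have forced: "admissible s T \<longleftrightarrow> (\<forall>d\<in>{1..dmax}. s d = kappa alpha de d)" for s
    using between alpha_less_1 by (force simp: admissible_def kappa_def)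
  then have adm: "admissible (kappa alpha de) T" by simp
  show ?thesis
  proof
    assume "endemic y"
    then obtain s where "admissible s T" "y = profile s T"
      using endemic_is_profile_at adm root by metis
    then show "y = yEE dmax m beta alpha gamma de"
      using forced yEE by (auto simp: profile_def)
  next
    assume "y = yEE dmax m beta alpha gamma de"
    then show "endemic y" using endemic_iff_admissible_profile adm root yEE by blast
  qed
qed

lemma admissible_at_threshold:
  assumes k: "k \<in> {1..dmax}" and adm: "admissible s (thr k)" and d: "d \<in> {1..dmax}" "d \<noteq> k"
  shows "s d = kappa alpha k d"
proof (cases "d < k")
  case True
  then have "thr k < thr d" using d k by (intro th_strict_antimono) auto
  then show ?thesis using True adm d by (simp add: admissible_def kappa_def)
next
  case False
  then have "thr d < thr k" using d k by (intro th_strict_antimono) auto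
  then show ?thesis using False adm d by (simp add: admissible_def kappa_def)
qed

lemma Theta_eq_imp_eq_if_agree_off:
  assumes k: "k \<in> {1..dmax}" and agree: "\<And>d. d \<noteq> k \<Longrightarrow> y d = y' d" and Theta: "\<Theta> y = \<Theta> y'"
  shows "y = y'"
proof -
  have "\<Theta> y = weight k * beta k * y k + (\<Sum>d\<in>{1..dmax} - {k}. weight d * beta d * y' d)"
    unfolding Theta_eq_weighted_sum using k agree by (simp add: sum.remove)
  moreover have "\<Theta> y' = weight k * beta k * y' k + (\<Sum>d\<in>{1..dmax} - {k}. weight d * beta d * y' d)"
    unfolding Theta_eq_weighted_sum using k by (simp add: sum.remove)
  moreover have "weight k * beta k \<noteq> 0" using weight_pos[OF k] beta_range k by fastforce
  ultimately have "y k = y' k" using Theta by simp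
  then show ?thesis using agree by (metis ext)
qed

text \<open>At \<open>\<Theta> = thr k\<close> only degree \<open>k\<close> may mix; its factor \<open>z + alpha * (1 - z)\<close>
  interpolates between \<open>kappa alpha k\<close> (\<open>z = 0\<close>) and \<open>kappa alpha (Suc k)\<close> (\<open>z = 1\<close>).\<close>

lemma admissible_balance_at_threshold_exists:
  assumes k: "k \<in> {1..dmax}"
    and lo: "balance (kappa alpha k) (thr k) \<le> 1" and hi: "1 \<le> balance (kappa alpha (Suc k)) (thr k)"
  obtains s where "admissible s (thr k)" "balance s (thr k) = 1"
proof -
  define mix where "mix z d = (if d < k then 1 else if d = k then z + alpha * (1 - z) else alpha)"
    for z :: real and d
  have "mix 0 = kappa alpha k" "mix 1 = kappa alpha (Suc k)"
    by (auto simp: fun_eq_iff mix_def kappa_def)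
  moreover have "continuous_on {0..1} (\<lambda>z. balance (mix z) (thr k))"
  proof (rule balance_continuous_on)
    show "continuous_on {0..1} (\<lambda>z. mix z d)" for d
      by (cases "d < k"; cases "d = k") (simp_all add: mix_def continuous_intros)
    show "0 \<le> mix z d" if "z \<in> {0..1}" for z d
      using that mixed_rate_bounds[OF alpha_less_1, of z] alpha_pos by (auto simp: mix_def)
  qed (simp_all add: th_nonneg)
  ultimately obtain z where z: "0 \<le> z" "z \<le> 1" "balance (mix z) (thr k) = 1"
    using IVT'[of "\<lambda>z. balance (mix z) (thr k)" 0 1 1] lo hi by auto
  have "admissible (mix z) (thr k)"
    unfolding admissible_def
  proof
    fix d assume d: "d \<in> {1..dmax}"
    have "d < k \<Longrightarrow> thr k < thr d" "k < d \<Longrightarrow> thr d < thr k"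
      using d k by (auto intro: th_strict_antimono)
    then show "alpha \<le> mix z d \<and> mix z d \<le> 1 \<and> (thr k < thr d \<longrightarrow> mix z d = 1)
        \<and> (thr d < thr k \<longrightarrow> mix z d = alpha)"
      using mixed_rate_bounds[OF alpha_less_1 z(1,2)] alpha_less_1
      by (cases d k rule: linorder_cases) (auto simp: mix_def)
  qed
  then show thesis using that z(3) by blast
qed

lemma endemic_unique_at_threshold:
  assumes k: "k \<in> {1..dmax}"
    and lo: "balance (kappa alpha k) (thr k) \<le> 1" and hi: "1 \<le> balance (kappa alpha (Suc k)) (thr k)"
  shows "(\<exists>!y. endemic y)
    \<and> (\<forall>y. endemic y \<longrightarrow> \<Theta> y = thr k \<and>
          (\<exists>zb. 0 \<le> zb \<and> zb \<le> 1 \<and>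
            (\<forall>d\<in>{1..dmax}.
               (let s = (if d < k then 1 else if d > k then alpha else zb + alpha * (1 - zb))
                in y d = s * real d * thr k / (gamma + s * real d * thr k)))))"
proof -
  have t0: "0 < thr k" using th_pos[OF k] .
  obtain s0 where s0: "admissible s0 (thr k)" "balance s0 (thr k) = 1"
    using admissible_balance_at_threshold_exists[OF k lo hi] .
  have exists: "endemic (profile s0 (thr k))"
    using endemic_iff_admissible_profile s0 t0 by blast
  have unique: "y = profile s0 (thr k)" if E: "endemic y" for y
  proof -
    obtain s where s: "admissible s (thr k)" "y = profile s (thr k)" "\<Theta> y = thr k"
      using endemic_is_profile_at[OF E s0(1) t0 s0(2)] .
    have "y d = profile s0 (thr k) d" if "d \<noteq> k" for d
      using that admissible_at_threshold[OF k s(1)] admissible_at_threshold[OF k s0(1)] s(2)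
      by (simp add: profile_def)
    moreover have "\<Theta> (profile s0 (thr k)) = thr k"
      using profile_solves_equilibrium(1)[OF admissible_pos[OF s0(1)] t0 s0(2)] .
    ultimately show ?thesis using Theta_eq_imp_eq_if_agree_off[OF k] s(3) by metis
  qed
  have shape: "\<Theta> y = thr k \<and> (\<exists>zb. 0 \<le> zb \<and> zb \<le> 1 \<and>
            (\<forall>d\<in>{1..dmax}.
               (let s = (if d < k then 1 else if d > k then alpha else zb + alpha * (1 - zb))
                in y d = s * real d * thr k / (gamma + s * real d * thr k))))"
    if E: "endemic y" for y
  proof -
    obtain s where s: "admissible s (thr k)" "y = profile s (thr k)" "\<Theta> y = thr k"
      using endemic_is_profile_at[OF E s0(1) t0 s0(2)] .
    define zb where "zb = (s k - alpha) / (1 - alpha)"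
    have "alpha \<le> s k" "s k \<le> 1" using s(1) k by (auto simp: admissible_def)
    note zb = mixed_rate_inverse[OF alpha_less_1 this, folded zb_def]
    have "(if d < k then 1 else if d > k then alpha else zb + alpha * (1 - zb)) = s d"
      if "d \<in> {1..dmax}" for d
      using admissible_at_threshold[OF k s(1) that] zb(1) by (auto simp: kappa_def)
    then have "\<forall>d\<in>{1..dmax}.
               (let s = (if d < k then 1 else if d > k then alpha else zb + alpha * (1 - zb))
                in y d = s * real d * thr k / (gamma + s * real d * thr k))"
      using s(2) by (simp add: profile_def Let_def)
    then show ?thesis using s(3) zb(2,3) by blast
  qed
  show ?thesis using exists unique shape by blast
qed

lemma deq_threshold_brackets:
  assumes R: "Rnum dmax m beta alpha gamma (dmax + 1) > 1"
    and lt: "dmin dmax alpha cP L < de" and TT: "thr (de - 1) \<le> ThetaEE dmax m beta alpha gamma de"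
  shows "de - 1 \<in> {1..dmax}" "balance (kappa alpha (de - 1)) (thr (de - 1)) \<le> 1"
    "1 \<le> balance (kappa alpha (Suc (de - 1))) (thr (de - 1))"
proof -
  note least = deq_least[OF R]
  show k: "de - 1 \<in> {1..dmax}" using lt least(2) dmin_in_degrees by auto
  show "balance (kappa alpha (de - 1)) (thr (de - 1)) \<le> 1"
    using k lt least(4)[of "de - 1"] th_pos[OF k] by (intro balance_kappa_le_1) auto
  have "Suc (de - 1) = de" using lt by simp
  then show "1 \<le> balance (kappa alpha (Suc (de - 1))) (thr (de - 1))"
    using balance_kappa_ge_1[OF deq_pos[OF R] least(2) Rnum_deq_gt_1[OF R]] TT th_nonneg by simp
qed

end

theorem theorem1:
  fixes dmax :: nat and m beta :: "nat \<Rightarrow> real" and alpha gamma cP L :: real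
  assumes "dmax \<ge> 1"
    and "\<forall>d\<in>{1..dmax}. m d > 0"
    and "(\<Sum>d=1..dmax. m d) = 1"
    and "0 < alpha" "alpha < 1" "0 < gamma" "gamma < 1"
    and "\<forall>d\<in>{1..dmax}. 0 < beta d \<and> beta d < 1"
    and "cP > 0" "L > 0"
    and "\<exists>d\<in>{1..dmax}. th dmax alpha cP L d < 1"
  shows
    "(Rnum dmax m beta alpha gamma (dmax + 1) \<le> 1 \<longrightarrow>
        (\<forall>y. sw_eq dmax m beta alpha gamma cP L y \<longleftrightarrow> y = (\<lambda>_. 0)))
   \<and> (Rnum dmax m beta alpha gamma (dmax + 1) > 1 \<longrightarrow>
        (let de = deq dmax m beta alpha gamma cP L;
             T = ThetaEE dmax m beta alpha gamma de;
             Tth = th dmax alpha cP L (de - 1)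
         in (T \<in> Ival dmax alpha cP L de \<longrightarrow>
               (\<forall>y. endemic_eq dmax m beta alpha gamma cP L y \<longleftrightarrow>
                    y = yEE dmax m beta alpha gamma de))
          \<and> (dmin dmax alpha cP L < de \<and> T \<ge> Tth \<longrightarrow>
               (\<exists>!y. endemic_eq dmax m beta alpha gamma cP L y)
             \<and> (\<forall>y. endemic_eq dmax m beta alpha gamma cP L y \<longrightarrow>
                   Theta dmax m beta y = Tth \<and>
                   (\<exists>zb. 0 \<le> zb \<and> zb \<le> 1 \<and>
                      (\<forall>d\<in>{1..dmax}.
                         (let s = (if d < de - 1 then 1 else if d > de - 1 then alpha
                                   else zb + alpha * (1 - zb))
                          in y d = s * real d * Tth / (gamma + s * real d * Tth))))))))"
proof -
  interpret sis_network dmax m beta alpha gamma cP L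
    using assms by unfold_locales auto
  have "\<exists>!y. endemic y" "\<forall>y. endemic y \<longrightarrow> \<Theta> y = thr (de - 1) \<and> (\<exists>zb. 0 \<le> zb \<and> zb \<le> 1 \<and>
          (\<forall>d\<in>{1..dmax}. (let s = (if d < de - 1 then 1 else if d > de - 1 then alpha
                                   else zb + alpha * (1 - zb))
                          in y d = s * real d * thr (de - 1) / (gamma + s * real d * thr (de - 1)))))"
    if "1 < Rnum dmax m beta alpha gamma (dmax + 1)" "dmin dmax alpha cP L < de"
      "thr (de - 1) \<le> ThetaEE dmax m beta alpha gamma de"
    using endemic_unique_at_threshold[OF deq_threshold_brackets[OF that]] by blast+
  then show ?thesis
    using sw_eq_iff_disease_free endemic_iff_yEE_deq by (simp add: Let_def)
qed

end
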